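(* Let $(X,\mathcal{A})$ be a measurable space, $f,g:X\to[0,1]$ two comonotone measurable functions, and $S$ a continuous t-conorm. Then for every monotone measure $m$ on $(X,\mathcal{A})$ with $m(X)=1$, \[ \mathbf{I}_S\big(m,S(f,g)\big)\ \le\ S\big(\mathbf{I}_S(m,f),\mathbf{I}_S(m,g)\big), \] where $S(f,g)(x)=S(f(x),g(x))$ for $x\in X$.
   Context: A monotone measure on $(X,\mathcal{A})$ is $m:\mathcal{A}\to[0,\infty]$ with $m(\emptyset)=0$, $m(X)>0$, $m(A)\le m(B)$ for $A\subseteq B$. A t-conorm is an associative, commutative map $S:[0,1]^2\to[0,1]$, non-decreasing in both components, with neutral element $0$. The semiconormed integral is $\mathbf{I}_S(m,f)=\inf\{S(t,m(\{f>t\})) : t\in(0,1]\}$. $f,g$ are comonotone if $(f(x)-f(y))(g(x)-g(y))\ge0$ for all $x,y\in X$. *)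

theory Defs
  imports "HOL-Analysis.Analysis"
begin

definition monotone_measure :: "'a measure \<Rightarrow> ('a set \<Rightarrow> ennreal) \<Rightarrow> bool" where
  "monotone_measure M m \<longleftrightarrow>
     m {} = 0 \<and> m (space M) > 0 \<and>
     (\<forall>A\<in>sets M. \<forall>B\<in>sets M. A \<subseteq> B \<longrightarrow> m A \<le> m B)"

text \<open>t-conorm on [0,1]; values of S outside [0,1]^2 are irrelevant.\<close>
definition t_conorm :: "(real \<Rightarrow> real \<Rightarrow> real) \<Rightarrow> bool" where
  "t_conorm S \<longleftrightarrow>
     (\<forall>x\<in>{0..1}. \<forall>y\<in>{0..1}. S x y \<in> {0..1}) \<and>
     (\<forall>x\<in>{0..1}. \<forall>y\<in>{0..1}. \<forall>z\<in>{0..1}. S (S x y) z = S x (S y z)) \<and>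
     (\<forall>x\<in>{0..1}. \<forall>y\<in>{0..1}. S x y = S y x) \<and>
     (\<forall>x\<in>{0..1}. \<forall>x'\<in>{0..1}. \<forall>y\<in>{0..1}. \<forall>y'\<in>{0..1}.
        x \<le> x' \<longrightarrow> y \<le> y' \<longrightarrow> S x y \<le> S x' y') \<and>
     (\<forall>x\<in>{0..1}. S x 0 = x)"

definition continuous_t_conorm :: "(real \<Rightarrow> real \<Rightarrow> real) \<Rightarrow> bool" where
  "continuous_t_conorm S \<longleftrightarrow> t_conorm S \<and>
     continuous_on ({0..1} \<times> {0..1}) (\<lambda>(x, y). S x y)"

text \<open>Semiconormed integral I_S(m,f) = inf {S(t, m{f>t}) | t \<in> (0,1]}.
  It is used only for measures with m(X) = 1, where all relevant values of m lie in [0,1];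
  enn2real converts them to reals.\<close>
definition semiconormed_integral ::
  "(real \<Rightarrow> real \<Rightarrow> real) \<Rightarrow> 'a measure \<Rightarrow> ('a set \<Rightarrow> ennreal) \<Rightarrow> ('a \<Rightarrow> real) \<Rightarrow> real" where
  "semiconormed_integral S M m f =
     (INF t\<in>{0<..1}. S t (enn2real (m {x\<in>space M. f x > t})))"

definition comonotone :: "'a set \<Rightarrow> ('a \<Rightarrow> real) \<Rightarrow> ('a \<Rightarrow> real) \<Rightarrow> bool" where
  "comonotone X f g \<longleftrightarrow> (\<forall>x\<in>X. \<forall>y\<in>X. (f x - f y) * (g x - g y) \<ge> 0)"

end

theory Submission
  imports Defs
begin

text \<open>Write \<open>\<mu>\<^sub>f(t) = m {f > t}\<close>, \<open>h = S(f, g)\<close> and \<open>u = S(t, s)\<close>. Monotonicity of \<open>S\<close> gives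
  \<open>{h > u} \<subseteq> {f > t} \<union> {g > s}\<close>, and comonotonicity makes the two sets on the right nested, so
  \<open>\<mu>\<^sub>h(u) \<le> max \<mu>\<^sub>f(t) \<mu>\<^sub>g(s) \<le> S(\<mu>\<^sub>f(t), \<mu>\<^sub>g(s))\<close>. As \<open>t \<le> u\<close>, the threshold \<open>u\<close> is admissible in
  the infimum defining \<open>\<I>\<^sub>S(m, h)\<close>, and associativity and commutativity of \<open>S\<close> yield
  \<open>\<I>\<^sub>S(m, h) \<le> S(S(t, \<mu>\<^sub>f(t)), S(s, \<mu>\<^sub>g(s)))\<close> for all \<open>t, s \<in> (0, 1]\<close>. Continuity of \<open>S\<close> lets both
  arguments pass to their infima.\<close>

lemma borel_measurable_continuous_on_comp:
  assumes "continuous_on A F" and "h \<in> borel_measurable M" and "\<forall>x\<in>space M. h x \<in> A"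
  shows "(\<lambda>x. F (h x)) \<in> borel_measurable M"
  using measurable_comp[OF measurable_restrict_space2 borel_measurable_continuous_on_restrict[OF assms(1)]]
    assms(2,3)
  by (auto simp: comp_def Pi_iff)

lemma le_continuous_at_Inf_Inf:
  fixes A B :: "real set" and F :: "real \<times> real \<Rightarrow> real"
  assumes "A \<noteq> {}" and "B \<noteq> {}" and "bdd_below A" and "bdd_below B"
    and "continuous_on (closure A \<times> closure B) F"
    and "\<And>x y. x \<in> A \<Longrightarrow> y \<in> B \<Longrightarrow> c \<le> F (x, y)"
  shows "c \<le> F (Inf A, Inf B)"
proof (rule continuous_ge_on_closure[where S = "A \<times> B"])
  show "continuous_on (closure (A \<times> B)) F"
    using assms(5) by (simp add: closure_Times)
  show "(Inf A, Inf B) \<in> closure (A \<times> B)"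
    using closure_contains_Inf assms(1-4) by (simp add: closure_Times)
  show "c \<le> F z" if "z \<in> A \<times> B" for z
    using that assms(6) by auto
qed

lemma t_conorm_closed:
  "t_conorm S \<Longrightarrow> x \<in> {0..1} \<Longrightarrow> y \<in> {0..1} \<Longrightarrow> S x y \<in> {0..1}"
  unfolding t_conorm_def by (elim conjE) blast

lemma t_conorm_commute:
  "t_conorm S \<Longrightarrow> x \<in> {0..1} \<Longrightarrow> y \<in> {0..1} \<Longrightarrow> S x y = S y x"
  unfolding t_conorm_def by (elim conjE) blast

lemma t_conorm_assoc:
  "t_conorm S \<Longrightarrow> x \<in> {0..1} \<Longrightarrow> y \<in> {0..1} \<Longrightarrow> z \<in> {0..1} \<Longrightarrow> S (S x y) z = S x (S y z)"
  unfolding t_conorm_def by (elim conjE) blast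

lemma t_conorm_mono:
  "t_conorm S \<Longrightarrow> x \<le> x' \<Longrightarrow> y \<le> y' \<Longrightarrow> x \<in> {0..1} \<Longrightarrow> x' \<in> {0..1} \<Longrightarrow> y \<in> {0..1} \<Longrightarrow>
    y' \<in> {0..1} \<Longrightarrow> S x y \<le> S x' y'"
  unfolding t_conorm_def by (elim conjE) blast

lemma t_conorm_zero_right:
  "t_conorm S \<Longrightarrow> x \<in> {0..1} \<Longrightarrow> S x 0 = x"
  unfolding t_conorm_def by (elim conjE) blast

lemma t_conorm_ge_left:
  assumes "t_conorm S" and "x \<in> {0..1}" and "y \<in> {0..1}"
  shows "x \<le> S x y"
proof -
  have "x = S x 0" using assms by (simp add: t_conorm_zero_right)
  also have "\<dots> \<le> S x y" using assms by (intro t_conorm_mono[OF assms(1)]) auto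
  finally show ?thesis .
qed

lemma t_conorm_ge_max:
  assumes "t_conorm S" and "x \<in> {0..1}" and "y \<in> {0..1}"
  shows "max x y \<le> S x y"
proof -
  have "y \<le> S y x" by (rule t_conorm_ge_left[OF assms(1,3,2)])
  then show ?thesis
    using t_conorm_ge_left[OF assms] t_conorm_commute[OF assms] by simp
qed

lemma t_conorm_swap_middle:
  assumes S: "t_conorm S" and "t \<in> {0..1}" "s \<in> {0..1}" "p \<in> {0..1}" "q \<in> {0..1}"
  shows "S (S t s) (S p q) = S (S t p) (S s q)"
proof -
  note unit = assms(2-5) and closed = t_conorm_closed[OF S] and assoc = t_conorm_assoc[OF S]
  have "S (S t s) (S p q) = S t (S s (S p q))" using unit closed by (intro assoc) auto
  also have "S s (S p q) = S (S s p) q" using unit by (intro assoc[symmetric])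
  also have "S s p = S p s" using unit by (intro t_conorm_commute[OF S])
  also have "S (S p s) q = S p (S s q)" using unit by (intro assoc)
  also have "S t (S p (S s q)) = S (S t p) (S s q)" using unit closed by (intro assoc[symmetric]) auto
  finally show ?thesis .
qed

lemma monotone_measure_mono:
  "monotone_measure M m \<Longrightarrow> A \<in> sets M \<Longrightarrow> B \<in> sets M \<Longrightarrow> A \<subseteq> B \<Longrightarrow> m A \<le> m B"
  unfolding monotone_measure_def by blast

lemma normalized_monotone_measure_le_one:
  assumes "monotone_measure M m" and "m (space M) = 1" and "A \<in> sets M"
  shows "m A \<le> 1"
  using monotone_measure_mono[OF assms(1,3) sets.top sets.sets_into_space[OF assms(3)]] assms(2)
  by simp

lemma borel_measurable_continuous_t_conorm:
  assumes "continuous_t_conorm S"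
    and "f \<in> borel_measurable M" and "\<forall>x\<in>space M. f x \<in> {0..1}"
    and "g \<in> borel_measurable M" and "\<forall>x\<in>space M. g x \<in> {0..1}"
  shows "(\<lambda>x. S (f x) (g x)) \<in> borel_measurable M"
proof -
  have "continuous_on ({0..1} \<times> {0..1}) (\<lambda>(x, y). S x y)"
    using assms(1) unfolding continuous_t_conorm_def by blast
  from borel_measurable_continuous_on_comp[OF this borel_measurable_Pair[OF assms(2,4)]]
  show ?thesis using assms(3,5) by simp
qed

definition superlevel_measure :: "'a measure \<Rightarrow> ('a set \<Rightarrow> ennreal) \<Rightarrow> ('a \<Rightarrow> real) \<Rightarrow> real \<Rightarrow> real"
  where "superlevel_measure M m f t = enn2real (m {x\<in>space M. f x > t})"

lemma semiconormed_integral_superlevel: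
  "semiconormed_integral S M m f = Inf ((\<lambda>t. S t (superlevel_measure M m f t)) ` {0<..1})"
  unfolding semiconormed_integral_def superlevel_measure_def ..

lemma superlevel_measure_in_unit:
  assumes "monotone_measure M m" and "m (space M) = 1" and "f \<in> borel_measurable M"
  shows "superlevel_measure M m f t \<in> {0..1}"
proof -
  have "{x\<in>space M. f x > t} \<in> sets M" using assms(3) by measurable
  then show ?thesis
    unfolding superlevel_measure_def
    using normalized_monotone_measure_le_one[OF assms(1,2)] by (simp add: enn2real_leI)
qed

lemma superlevel_measure_mono_sets:
  assumes "monotone_measure M m" and "m (space M) = 1"
    and "f \<in> borel_measurable M" and "g \<in> borel_measurable M"
    and "{x\<in>space M. f x > t} \<subseteq> {x\<in>space M. g x > s}"
  shows "superlevel_measure M m f t \<le> superlevel_measure M m g s"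
proof -
  have sets: "{x\<in>space M. f x > t} \<in> sets M" "{x\<in>space M. g x > s} \<in> sets M"
    using assms(3,4) by measurable
  have "m {x\<in>space M. g x > s} < top"
    using normalized_monotone_measure_le_one[OF assms(1,2) sets(2)] ennreal_one_less_top
    by (rule order.strict_trans1)
  then show ?thesis
    unfolding superlevel_measure_def
    using monotone_measure_mono[OF assms(1) sets assms(5)] by (rule enn2real_mono[rotated])
qed

lemma comonotone_superlevel_sets_nested:
  assumes "comonotone X f g"
  shows "{x\<in>X. f x > t} \<subseteq> {x\<in>X. g x > s} \<or> {x\<in>X. g x > s} \<subseteq> {x\<in>X. f x > t}"
proof (rule ccontr)
  assume "\<not> ?thesis"
  then obtain x y where "x \<in> X" "f x > t" "\<not> g x > s" and "y \<in> X" "g y > s" "\<not> f y > t"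
    by blast
  then have "f x - f y > 0" and "g x - g y < 0" and "(f x - f y) * (g x - g y) \<ge> 0"
    using assms unfolding comonotone_def by auto
  then show False using mult_pos_neg[of "f x - f y" "g x - g y"] by linarith
qed

lemma t_conorm_superlevel_subset:
  assumes "t_conorm S" and "t \<in> {0..1}" and "s \<in> {0..1}"
    and "\<forall>x\<in>X. f x \<in> {0..1}" and "\<forall>x\<in>X. g x \<in> {0..1}"
  shows "{x\<in>X. S (f x) (g x) > S t s} \<subseteq> {x\<in>X. f x > t} \<union> {x\<in>X. g x > s}"
proof
  fix x assume x: "x \<in> {x\<in>X. S (f x) (g x) > S t s}"
  show "x \<in> {x\<in>X. f x > t} \<union> {x\<in>X. g x > s}"
  proof (rule ccontr)
    assume "x \<notin> {x\<in>X. f x > t} \<union> {x\<in>X. g x > s}"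
    then have "f x \<le> t" and "g x \<le> s" using x by auto
    then have "S (f x) (g x) \<le> S t s" using x assms by (intro t_conorm_mono[OF assms(1)]) auto
    then show False using x by simp
  qed
qed

lemma superlevel_measure_t_conorm_le:
  assumes S: "t_conorm S" and "t \<in> {0..1}" and "s \<in> {0..1}"
    and m: "monotone_measure M m" "m (space M) = 1"
    and f: "f \<in> borel_measurable M" "\<forall>x\<in>space M. f x \<in> {0..1}"
    and g: "g \<in> borel_measurable M" "\<forall>x\<in>space M. g x \<in> {0..1}"
    and h: "(\<lambda>x. S (f x) (g x)) \<in> borel_measurable M"
    and "comonotone (space M) f g"
  shows "superlevel_measure M m (\<lambda>x. S (f x) (g x)) (S t s)
         \<le> S (superlevel_measure M m f t) (superlevel_measure M m g s)"
proof -
  let ?F = "{x\<in>space M. f x > t}" and ?G = "{x\<in>space M. g x > s}"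
    and ?H = "{x\<in>space M. S (f x) (g x) > S t s}"
  have sub: "?H \<subseteq> ?F \<union> ?G"
    by (rule t_conorm_superlevel_subset[OF S \<open>t \<in> _\<close> \<open>s \<in> _\<close> f(2) g(2)])
  from comonotone_superlevel_sets_nested[OF \<open>comonotone (space M) f g\<close>]
  consider "?F \<subseteq> ?G" | "?G \<subseteq> ?F" by blast
  then have "superlevel_measure M m (\<lambda>x. S (f x) (g x)) (S t s)
        \<le> max (superlevel_measure M m f t) (superlevel_measure M m g s)"
  proof cases
    case 1
    then have "?H \<subseteq> ?G" using sub by blast
    then show ?thesis by (intro max.coboundedI2 superlevel_measure_mono_sets[OF m h g(1)])
  next
    case 2
    then have "?H \<subseteq> ?F" using sub by blast
    then show ?thesis by (intro max.coboundedI1 superlevel_measure_mono_sets[OF m h f(1)])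
  qed
  also have "\<dots> \<le> S (superlevel_measure M m f t) (superlevel_measure M m g s)"
    by (intro t_conorm_ge_max[OF S] superlevel_measure_in_unit[OF m f(1)]
        superlevel_measure_in_unit[OF m g(1)])
  finally show ?thesis .
qed

lemma semiconormed_integral_values_in_unit:
  assumes "t_conorm S" and "monotone_measure M m" and "m (space M) = 1"
    and "f \<in> borel_measurable M"
  shows "(\<lambda>t. S t (superlevel_measure M m f t)) ` {0<..1} \<subseteq> {0..1}"
  by (auto intro!: t_conorm_closed[OF assms(1)] superlevel_measure_in_unit[OF assms(2-4)])

lemma semiconormed_integral_le:
  assumes "t_conorm S" and "monotone_measure M m" and "m (space M) = 1"
    and "f \<in> borel_measurable M" and "t \<in> {0<..1}"
  shows "semiconormed_integral S M m f \<le> S t (superlevel_measure M m f t)"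
  unfolding semiconormed_integral_superlevel
  using semiconormed_integral_values_in_unit[OF assms(1-4)] assms(5)
  by (intro cInf_lower imageI bdd_belowI[of _ 0]) auto

lemma semiconormed_integral_t_conorm_le_pointwise:
  assumes S: "t_conorm S" and t: "t \<in> {0<..1}" and s: "s \<in> {0<..1}"
    and m: "monotone_measure M m" "m (space M) = 1"
    and f: "f \<in> borel_measurable M" "\<forall>x\<in>space M. f x \<in> {0..1}"
    and g: "g \<in> borel_measurable M" "\<forall>x\<in>space M. g x \<in> {0..1}"
    and h: "(\<lambda>x. S (f x) (g x)) \<in> borel_measurable M"
    and "comonotone (space M) f g"
  shows "semiconormed_integral S M m (\<lambda>x. S (f x) (g x))
         \<le> S (S t (superlevel_measure M m f t)) (S s (superlevel_measure M m g s))"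
proof -
  let ?h = "\<lambda>x. S (f x) (g x)" and ?u = "S t s"
    and ?p = "superlevel_measure M m f t" and ?q = "superlevel_measure M m g s"
  have unit: "t \<in> {0..1}" "s \<in> {0..1}" "?p \<in> {0..1}" "?q \<in> {0..1}"
    using t s superlevel_measure_in_unit[OF m] f g by auto
  have u: "?u \<in> {0<..1}"
    using t t_conorm_ge_left[OF S unit(1,2)] t_conorm_closed[OF S unit(1,2)] by auto
  have "semiconormed_integral S M m ?h \<le> S ?u (superlevel_measure M m ?h ?u)"
    by (rule semiconormed_integral_le[OF S m h u])
  also have "\<dots> \<le> S ?u (S ?p ?q)"
    using superlevel_measure_t_conorm_le[OF S unit(1,2) m f g h \<open>comonotone _ f g\<close>] u unit
      superlevel_measure_in_unit[OF m h] t_conorm_closed[OF S]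
    by (intro t_conorm_mono[OF S]) auto
  also have "\<dots> = S (S t ?p) (S s ?q)"
    by (rule t_conorm_swap_middle[OF S unit])
  finally show ?thesis .
qed

lemma le_continuous_t_conorm_semiconormed_integrals:
  assumes "continuous_t_conorm S" and m: "monotone_measure M m" "m (space M) = 1"
    and "f \<in> borel_measurable M" and "g \<in> borel_measurable M"
    and bound: "\<And>t s. t \<in> {0<..1} \<Longrightarrow> s \<in> {0<..1} \<Longrightarrow>
      c \<le> S (S t (superlevel_measure M m f t)) (S s (superlevel_measure M m g s))"
  shows "c \<le> S (semiconormed_integral S M m f) (semiconormed_integral S M m g)"
proof -
  have S: "t_conorm S" and cont: "continuous_on ({0..1} \<times> {0..1}) (\<lambda>(x, y). S x y)"
    using assms(1) unfolding continuous_t_conorm_def by auto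
  define A where "A = (\<lambda>t. S t (superlevel_measure M m f t)) ` {0<..1}"
  define B where "B = (\<lambda>s. S s (superlevel_measure M m g s)) ` {0<..1}"
  have A: "A \<subseteq> {0..1}" and B: "B \<subseteq> {0..1}"
    unfolding A_def B_def using semiconormed_integral_values_in_unit[OF S m] assms(4,5) by auto
  have "c \<le> (\<lambda>(x, y). S x y) (Inf A, Inf B)"
  proof (rule le_continuous_at_Inf_Inf)
    show "A \<noteq> {}" and "B \<noteq> {}" unfolding A_def B_def by auto
    show "bdd_below A" and "bdd_below B" using A B by (auto intro: bdd_below_mono)
    have "closure A \<times> closure B \<subseteq> {0..1} \<times> {0..1}"
      using A B by (intro Sigma_mono closure_minimal) auto
    then show "continuous_on (closure A \<times> closure B) (\<lambda>(x, y). S x y)"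
      by (rule continuous_on_subset[OF cont])
    show "c \<le> (\<lambda>(x, y). S x y) (a, b)" if "a \<in> A" and "b \<in> B" for a b
      using that bound unfolding A_def B_def by auto
  qed
  then show ?thesis
    by (simp add: A_def B_def semiconormed_integral_superlevel)
qed

theorem corollary4p10:
  fixes M :: "'a measure" and f g :: "'a \<Rightarrow> real" and S :: "real \<Rightarrow> real \<Rightarrow> real"
    and m :: "'a set \<Rightarrow> ennreal"
  assumes "f \<in> borel_measurable M" and "g \<in> borel_measurable M"
    and "\<forall>x\<in>space M. f x \<in> {0..1}" and "\<forall>x\<in>space M. g x \<in> {0..1}"
    and "comonotone (space M) f g"
    and "continuous_t_conorm S"
    and "monotone_measure M m" and "m (space M) = 1"
  shows "semiconormed_integral S M m (\<lambda>x. S (f x) (g x))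
         \<le> S (semiconormed_integral S M m f) (semiconormed_integral S M m g)"
proof (rule le_continuous_t_conorm_semiconormed_integrals[OF assms(6-8,1,2)])
  have S: "t_conorm S"
    using assms(6) unfolding continuous_t_conorm_def by blast
  have "(\<lambda>x. S (f x) (g x)) \<in> borel_measurable M"
    by (rule borel_measurable_continuous_t_conorm[OF assms(6,1,3,2,4)])
  then show "semiconormed_integral S M m (\<lambda>x. S (f x) (g x))
      \<le> S (S t (superlevel_measure M m f t)) (S s (superlevel_measure M m g s))"
    if "t \<in> {0<..1}" and "s \<in> {0<..1}" for t s
    by (rule semiconormed_integral_t_conorm_le_pointwise[OF S that assms(7,8,1,3,2,4) _ assms(5)])
qed

end
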